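(* Let $t\geq 3$, $E_t=\{1,\ldots,t\}$, and let $A$ be a nonempty subset of $E_t$, written as a disjoint union of intervals of integers $A=[i_1,j_1]\,\dot\cup\,[i_2,j_2]\,\dot\cup\cdots\dot\cup\,[i_\varrho,j_\varrho]$ with $i_k\le j_k$ and $j_k+2\le i_{k+1}$ for $1\le k\le\varrho-1$. Let $T:={}_{-A}\mathrm{T}^{(+)}\in\{1,-1\}^t$ be the vector with $T(e)=-1$ for $e\in A$ and $T(e)=1$ otherwise. Then: (i) If $\{1,t\}\cap A=\{1\}$ (so $i_1=1$), then $\mathfrak{q}(T)=2\varrho-1$, $\boldsymbol{x}(T)=\sum_{k=1}^{\varrho}\boldsymbol{\sigma}(j_k+1)-\sum_{\ell=2}^{\varrho}\boldsymbol{\sigma}(i_\ell)$; moreover $\mathfrak{q}(\mathrm{ro}(T))=2\varrho-1$, $\boldsymbol{x}(\mathrm{ro}(T))=\sum_{k=1}^{\varrho}\boldsymbol{\sigma}(t-j_k+1)-\sum_{\ell=2}^{\varrho}\boldsymbol{\sigma}(t-i_\ell+2)$, and $\boldsymbol{x}(\mathrm{ro}(T))=\boldsymbol{x}(T)\,\overline{\mathbf{U}}(t)\,\overline{\mathbf{T}}(t)$. (ii) If $\{1,t\}\cap A=\{1,t\}$ (so $i_1=1$, $j_\varrho=t$), then $\mathfrak{q}(T)=2\varrho-1$, $\boldsymbol{x}(T)=-\boldsymbol{\sigma}(1)+\sum_{k=1}^{\varrho-1}\boldsymbol{\sigma}(j_k+1)-\sum_{\ell=2}^{\varrho}\boldsymbol{\sigma}(i_\ell)$;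 moreover $\mathfrak{q}(\mathrm{ro}(T))=2\varrho-1$, $\boldsymbol{x}(\mathrm{ro}(T))=\boldsymbol{\sigma}(1)+\sum_{k=1}^{\varrho-1}\boldsymbol{\sigma}(t-j_k+1)-\sum_{\ell=2}^{\varrho}\boldsymbol{\sigma}(t-i_\ell+2)$, and $\boldsymbol{x}(\mathrm{ro}(T))=\boldsymbol{\sigma}(1)+\boldsymbol{x}(T)\,\overline{\mathbf{U}}(t)\,\overline{\mathbf{T}}(t)$. (iii) If $\{1,t\}\cap A=\emptyset$, then $\mathfrak{q}(T)=2\varrho+1$, $\boldsymbol{x}(T)=\boldsymbol{\sigma}(1)+\sum_{k=1}^{\varrho}\boldsymbol{\sigma}(j_k+1)-\sum_{\ell=1}^{\varrho}\boldsymbol{\sigma}(i_\ell)$; moreover $\mathfrak{q}(\mathrm{ro}(T))=2\varrho+1$, $\boldsymbol{x}(\mathrm{ro}(T))=-\boldsymbol{\sigma}(1)+\sum_{k=1}^{\varrho}\boldsymbol{\sigma}(t-j_k+1)-\sum_{\ell=1}^{\varrho}\boldsymbol{\sigma}(t-i_\ell+2)$, and $\boldsymbol{x}(\mathrm{ro}(T))=-\boldsymbol{\sigma}(1)+\boldsymbol{x}(T)\,\overline{\mathbf{U}}(t)\,\overline{\mathbf{T}}(t)$. (iv) If $\{1,t\}\cap A=\{t\}$ (so $j_\varrho=t$), then $\mathfrak{q}(T)=2\varrho-1$, $\boldsymbol{x}(T)=\sum_{k=1}^{\varrho-1}\boldsymbol{\sigma}(j_k+1)-\sum_{\ell=1}^{\varrho}\boldsymbol{\sigma}(i_\ell)$;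 moreover $\mathfrak{q}(\mathrm{ro}(T))=2\varrho-1$, $\boldsymbol{x}(\mathrm{ro}(T))=\sum_{k=1}^{\varrho-1}\boldsymbol{\sigma}(t-j_k+1)-\sum_{\ell=1}^{\varrho}\boldsymbol{\sigma}(t-i_\ell+2)$, and $\boldsymbol{x}(\mathrm{ro}(T))=\boldsymbol{x}(T)\,\overline{\mathbf{U}}(t)\,\overline{\mathbf{T}}(t)$.
   Context: Vectors are row vectors in $\mathbb{R}^t$; $\boldsymbol{\sigma}(e)$ is the $e$-th standard unit vector, $\mathrm{T}^{(+)}=(1,\ldots,1)$. For $S\subseteq E_t$, ${}_{-S}\mathrm{T}^{(+)}$ denotes the vector with entries $-1$ on $S$ and $1$ elsewhere. Define $R^0:=\mathrm{T}^{(+)}$ and $R^s:={}_{-[s]}\mathrm{T}^{(+)}$ for $1\le s\le t-1$, where $[s]=\{1,\ldots,s\}$ (these form the first half of a symmetric cycle $R^0,\ldots,R^{2t-1}$ in the hypercube graph on $\{1,-1\}^t$, with $R^{t+k}=-R^k$). The vectors $R^0,\ldots,R^{t-1}$ form a basis of $\mathbb{R}^t$; for $T\in\{1,-1\}^t$, $\boldsymbol{x}(T)=(x_1,\ldots,x_t)$ denotes the unique vector (it lies in $\{-1,0,1\}^t$) with $T=\sum_{i=1}^t x_iR^{i-1}$, and $\mathfrak{q}(T)$ denotes the number of nonzero entries of $\boldsymbol{x}(T)$ (equivalently the cardinality of the unique inclusion-minimal subset of $\{R^0,\ldots,R^{2t-1}\}$ summing to $T$). $\overline{\mathbf{U}}(t)$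 is the $t\times t$ backward identity matrix, with $(i,j)$ entry $\delta_{i+j,t+1}$; $\overline{\mathbf{T}}(t)$ is the $t\times t$ forward shift matrix, with $(i,j)$ entry $\delta_{j-i,1}$. The relabeled opposite of $T$ is $\mathrm{ro}(T):=-T\,\overline{\mathbf{U}}(t)$, i.e. $\mathrm{ro}(T)(e)=-T(t-e+1)$. *)

theory Defs
  imports Complex_Main "HOL-Library.Function_Algebras"
begin

text \<open>Vectors in R^t are modelled as functions nat \<Rightarrow> real, indexed by
  E_t = {1..t}, with value 0 outside {1..t}.  Matrices are functions nat \<Rightarrow> nat \<Rightarrow> real.\<close>

definition vecs :: "nat \<Rightarrow> (nat \<Rightarrow> real) set" where
  "vecs t = {v. \<forall>i. i \<notin> {1..t} \<longrightarrow> v i = 0}"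

definition unitv :: "nat \<Rightarrow> nat \<Rightarrow> real" where
  "unitv e = (\<lambda>i. if i = e then 1 else 0)"

definition minusT :: "nat \<Rightarrow> nat set \<Rightarrow> nat \<Rightarrow> real" where
  "minusT t S = (\<lambda>e. if e \<in> {1..t} then (if e \<in> S then -1 else 1) else 0)"

definition Rvec :: "nat \<Rightarrow> nat \<Rightarrow> nat \<Rightarrow> real" where
  "Rvec t s = minusT t {1..s}"

definition xvec :: "nat \<Rightarrow> (nat \<Rightarrow> real) \<Rightarrow> nat \<Rightarrow> real" where
  "xvec t T = (THE x. x \<in> vecs t \<and> T = (\<Sum>i\<in>{1..t}. (\<lambda>e. x i * Rvec t (i - 1) e)))"

definition qnum :: "nat \<Rightarrow> (nat \<Rightarrow> real) \<Rightarrow> nat" where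
  "qnum t T = card {i \<in> {1..t}. xvec t T i \<noteq> 0}"

definition vecmat :: "nat \<Rightarrow> (nat \<Rightarrow> real) \<Rightarrow> (nat \<Rightarrow> nat \<Rightarrow> real) \<Rightarrow> nat \<Rightarrow> real" where
  "vecmat t v M = (\<lambda>j. if j \<in> {1..t} then (\<Sum>i\<in>{1..t}. v i * M i j) else 0)"

definition Ubar :: "nat \<Rightarrow> nat \<Rightarrow> nat \<Rightarrow> real" where
  "Ubar t i j = (if i + j = t + 1 then 1 else 0)"

definition Tbar :: "nat \<Rightarrow> nat \<Rightarrow> nat \<Rightarrow> real" where
  "Tbar t i j = (if int j - int i = 1 then 1 else 0)"

definition ro :: "nat \<Rightarrow> (nat \<Rightarrow> real) \<Rightarrow> nat \<Rightarrow> real" where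
  "ro t T = vecmat t (- T) (Ubar t)"

end

theory Submission
  imports Defs
begin

text \<open>For n >= 2 the basis vector R^(n-1) has a single jump, from -1 to 1 between the positions
  n - 1 and n, and its first and last entries cancel, while R^0 is constant.  Hence the coordinates
  of any T are read off from its jumps: x_1 = (T(1) + T(t))/2 and x_n = (T(n) - T(n-1))/2.  For
  T = -A T(+) the jumps are -1 at the left ends i_l > 1 and +1 at the points j_k + 1 <= t, and the
  gaps of length at least one keep all these points distinct.  The relabeled opposite reverses and
  negates T, which negates x_1 and moves the jump at n to t + 2 - n with the same sign; on the
  coordinates 2..t this is the permutation x |-> x Ubar(t) Tbar(t).\<close>

lemma sum_fun_apply: "(\<Sum>k\<in>K. f k) x = (\<Sum>k\<in>K. f k x)"
  for f :: "'a \<Rightarrow> 'b \<Rightarrow> 'c::comm_monoid_add"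
  by (induction K rule: infinite_finite_induct) auto

definition R_combination :: "nat \<Rightarrow> (nat \<Rightarrow> real) \<Rightarrow> nat \<Rightarrow> real" where
  "R_combination t x = (\<Sum>i\<in>{1..t}. (\<lambda>e. x i * Rvec t (i - 1) e))"

definition R_coords :: "nat \<Rightarrow> (nat \<Rightarrow> real) \<Rightarrow> nat \<Rightarrow> real" where
  "R_coords t T n =
     (if n = 1 then (T 1 + T t) / 2 else if n \<in> {2..t} then (T n - T (n - 1)) / 2 else 0)"

lemma Rvec_apply: "Rvec t s e = (if e \<in> {1..t} then if e \<le> s then -1 else 1 else 0)"
  by (auto simp: Rvec_def minusT_def)

lemma R_combination_apply: "R_combination t x e = (\<Sum>i\<in>{1..t}. x i * Rvec t (i - 1) e)"
  by (simp add: R_combination_def sum_fun_apply)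

lemma R_combination_in_vecs: "R_combination t x \<in> vecs t"
  by (auto simp: vecs_def R_combination_apply Rvec_apply)

lemma R_coords_in_vecs: "1 \<le> t \<Longrightarrow> R_coords t T \<in> vecs t"
  by (simp add: vecs_def R_coords_def)

lemma R_combination_step:
  assumes "1 \<le> e" "e < t"
  shows "R_combination t x (e + 1) - R_combination t x e = 2 * x (e + 1)"
proof -
  have "R_combination t x (e + 1) - R_combination t x e
      = (\<Sum>i\<in>{1..t}. x i * (Rvec t (i - 1) (e + 1) - Rvec t (i - 1) e))"
    by (simp add: R_combination_apply sum_subtractf[symmetric] algebra_simps)
  also have "\<dots> = (\<Sum>i\<in>{1..t}. if i = e + 1 then 2 * x i else 0)"
    using assms by (intro sum.cong) (auto simp: Rvec_apply)
  finally show ?thesis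
    using assms by simp
qed

lemma R_combination_first_plus_last:
  assumes "1 \<le> t"
  shows "R_combination t x 1 + R_combination t x t = 2 * x 1"
proof -
  have "R_combination t x 1 + R_combination t x t
      = (\<Sum>i\<in>{1..t}. x i * (Rvec t (i - 1) 1 + Rvec t (i - 1) t))"
    by (simp add: R_combination_apply sum.distrib[symmetric] algebra_simps)
  also have "\<dots> = (\<Sum>i\<in>{1..t}. if i = 1 then 2 * x i else 0)"
    using assms by (intro sum.cong) (auto simp: Rvec_apply)
  finally show ?thesis
    using assms by simp
qed

lemma R_coords_R_combination:
  assumes "x \<in> vecs t" "1 \<le> t"
  shows "R_coords t (R_combination t x) = x"
proof
  fix n
  show "R_coords t (R_combination t x) n = x n"
  proof (cases "n = 1 \<or> n \<in> {2..t}")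
    case True
    then show ?thesis
      using R_combination_first_plus_last[OF assms(2)] R_combination_step[of "n - 1" t x]
      by (auto simp: R_coords_def)
  next
    case False
    then have "n \<notin> {1..t}"
      by auto
    then show ?thesis
      using False assms(1) by (auto simp: R_coords_def vecs_def)
  qed
qed

lemma R_coords_inj:
  assumes u: "u \<in> vecs t" and v: "v \<in> vecs t" and eq: "R_coords t u = R_coords t v"
  shows "u = v"
proof
  fix e
  have diff_step: "u (n + 1) - v (n + 1) = u n - v n" if "1 \<le> n" "n < t" for n
    using fun_cong[OF eq, of "n + 1"] that by (simp add: R_coords_def)
  have const: "u m - v m = u 1 - v 1" if "1 \<le> m" "m \<le> t" for m
    using that(1)
  proof (induction m rule: dec_induct)
    case (step n)
    then show ?case
      using diff_step[of n] that(2) by simp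
  qed simp
  show "u e = v e"
  proof (cases "e \<in> {1..t}")
    case True
    have "u 1 + u t = v 1 + v t"
      using fun_cong[OF eq, of 1] by (simp add: R_coords_def)
    then have "u 1 - v 1 = 0"
      using const[of t] True by simp
    then show ?thesis
      using const[of e] True by simp
  next
    case False
    then show ?thesis
      using u v by (simp add: vecs_def)
  qed
qed

lemma R_combination_R_coords:
  assumes "T \<in> vecs t" "1 \<le> t"
  shows "R_combination t (R_coords t T) = T"
  using assms by (intro R_coords_inj[OF R_combination_in_vecs])
    (simp_all add: R_coords_R_combination R_coords_in_vecs)

lemma xvec_eq_R_coords:
  assumes "T \<in> vecs t" "1 \<le> t"
  shows "xvec t T = R_coords t T"
  unfolding xvec_def R_combination_def [symmetric]
proof (rule the_equality)
  show "R_coords t T \<in> vecs t \<and> T = R_combination t (R_coords t T)"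
    using assms by (simp add: R_coords_in_vecs R_combination_R_coords)
next
  fix x
  assume "x \<in> vecs t \<and> T = R_combination t x"
  then show "x = R_coords t T"
    using assms(2) by (simp add: R_coords_R_combination)
qed

lemma ro_apply: "ro t T e = (if e \<in> {1..t} then - T (t + 1 - e) else 0)"
proof (cases "e \<in> {1..t}")
  case True
  have "ro t T e = (\<Sum>i\<in>{1..t}. - T i * (if i + e = t + 1 then 1 else 0))"
    using True by (simp add: ro_def vecmat_def Ubar_def)
  also have "\<dots> = (\<Sum>i\<in>{1..t}. if i = t + 1 - e then - T i else 0)"
    using True by (intro sum.cong) auto
  finally show ?thesis
    using True by auto
qed (auto simp: ro_def vecmat_def)

lemma ro_in_vecs: "ro t T \<in> vecs t"
  by (simp add: vecs_def ro_apply)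

lemma R_coords_ro:
  assumes "1 \<le> t"
  shows "R_coords t (ro t T) n =
    (if n = 1 then - R_coords t T 1 else if n \<in> {2..t} then R_coords t T (t + 2 - n) else 0)"
proof -
  consider "n = 1" | "n \<in> {2..t}" | "n \<notin> {1..t}"
    by fastforce
  then show ?thesis
  proof cases
    case 1
    then show ?thesis
      using assms by (simp add: R_coords_def ro_apply field_simps)
  next
    case 2
    then have "t + 2 - n \<in> {2..t}" "n - 1 \<in> {1..t}"
      and "t + 2 - n - 1 = t + 1 - n" "t + 1 - (n - 1) = t + 2 - n"
      by auto
    with 2 show ?thesis
      by (simp add: R_coords_def ro_apply)
  next
    case 3
    then show ?thesis
      using assms by (auto simp: R_coords_def)
  qed
qed

lemma vecmat_Ubar_Tbar:
  "vecmat t (vecmat t x (Ubar t)) (Tbar t) n = (if n \<in> {2..t} then x (t + 2 - n) else 0)"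
proof (cases "n \<in> {2..t}")
  case True
  have "vecmat t (vecmat t x (Ubar t)) (Tbar t) n
      = (\<Sum>m\<in>{1..t}. vecmat t x (Ubar t) m * (if int n - int m = 1 then 1 else 0))"
    using True by (simp add: vecmat_def [of t "vecmat t x (Ubar t)"] Tbar_def)
  also have "\<dots> = (\<Sum>m\<in>{1..t}. if m = n - 1 then vecmat t x (Ubar t) m else 0)"
    using True by (intro sum.cong) auto
  also have "\<dots> = (\<Sum>m\<in>{1..t}. x m * (if m + (n - 1) = t + 1 then 1 else 0))"
    using True by (auto simp: vecmat_def Ubar_def)
  also have "\<dots> = (\<Sum>m\<in>{1..t}. if m = t + 2 - n then x m else 0)"
    using True by (intro sum.cong) auto
  finally show ?thesis
    using True by auto
next
  case False
  then have "n \<notin> {1..t} \<or> n = 1"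
    by auto
  then show ?thesis
    using False by (auto simp: vecmat_def Tbar_def intro!: sum.neutral)
qed

lemma xvec_ro:
  assumes "T \<in> vecs t" "1 \<le> t"
  shows "xvec t (ro t T) =
    (\<lambda>n. - xvec t T 1 * unitv 1 n) + vecmat t (vecmat t (xvec t T) (Ubar t)) (Tbar t)"
  using assms by (auto simp: fun_eq_iff xvec_eq_R_coords ro_in_vecs R_coords_ro vecmat_Ubar_Tbar unitv_def)

lemma qnum_ro:
  assumes "T \<in> vecs t" "1 \<le> t"
  shows "qnum t (ro t T) = qnum t T"
proof -
  define r where "r n = (if n = 1 then 1 else t + 2 - n)" for n
  have r_range: "r n \<in> {1..t}" and r_r: "r (r n) = n" if "n \<in> {1..t}" for n
    using that by (auto simp: r_def)
  have R_coords_ro_r: "R_coords t (ro t T) n \<noteq> 0 \<longleftrightarrow> R_coords t T (r n) \<noteq> 0"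
    if "n \<in> {1..t}" for n
    using that assms(2) by (auto simp: r_def R_coords_ro)
  have "bij_betw r {n \<in> {1..t}. R_coords t T n \<noteq> 0} {n \<in> {1..t}. R_coords t (ro t T) n \<noteq> 0}"
  proof (rule bij_betw_byWitness)
    show "r ` {n \<in> {1..t}. R_coords t T n \<noteq> 0} \<subseteq> {n \<in> {1..t}. R_coords t (ro t T) n \<noteq> 0}"
      using r_range r_r R_coords_ro_r by fastforce
    show "r ` {n \<in> {1..t}. R_coords t (ro t T) n \<noteq> 0} \<subseteq> {n \<in> {1..t}. R_coords t T n \<noteq> 0}"
      using r_range R_coords_ro_r by fastforce
  qed (simp_all add: r_r)
  then show ?thesis
    using assms by (simp add: qnum_def xvec_eq_R_coords ro_in_vecs bij_betw_same_card)
qed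

definition exit_points :: "nat \<Rightarrow> nat set \<Rightarrow> nat set" where
  "exit_points t A = {n \<in> {2..t}. n - 1 \<in> A \<and> n \<notin> A}"

definition entry_points :: "nat \<Rightarrow> nat set \<Rightarrow> nat set" where
  "entry_points t A = {n \<in> {2..t}. n - 1 \<notin> A \<and> n \<in> A}"

lemma minusT_in_vecs: "minusT t A \<in> vecs t"
  by (simp add: vecs_def minusT_def)

lemma sum_unitv_apply: "finite S \<Longrightarrow> (\<Sum>n\<in>S. unitv n) m = (if m \<in> S then 1 else 0)"
  by (simp add: sum_fun_apply unitv_def)

lemma xvec_minusT_apply:
  assumes "1 \<le> t"
  shows "xvec t (minusT t A) n = (minusT t A 1 + minusT t A t) / 2 * unitv 1 n
    + (if n \<in> exit_points t A then 1 else 0) - (if n \<in> entry_points t A then 1 else 0)"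
  unfolding xvec_eq_R_coords[OF minusT_in_vecs assms]
  using assms by (auto simp: R_coords_def exit_points_def entry_points_def minusT_def unitv_def)

lemma xvec_minusT:
  assumes "1 \<le> t"
  shows "xvec t (minusT t A) = (\<lambda>n. (minusT t A 1 + minusT t A t) / 2 * unitv 1 n)
    + (\<Sum>n\<in>exit_points t A. unitv n) - (\<Sum>n\<in>entry_points t A. unitv n)"
  using assms by (simp add: fun_eq_iff xvec_minusT_apply sum_unitv_apply exit_points_def entry_points_def)

lemma xvec_minusT_first:
  assumes "1 \<le> t"
  shows "xvec t (minusT t A) 1 = (minusT t A 1 + minusT t A t) / 2"
  using xvec_minusT_apply[OF assms, of A 1] by (simp add: exit_points_def entry_points_def unitv_def)

lemma xvec_ro_minusT:
  assumes "1 \<le> t"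
  shows "xvec t (ro t (minusT t A)) = (\<lambda>n. - ((minusT t A 1 + minusT t A t) / 2) * unitv 1 n)
    + vecmat t (vecmat t (xvec t (minusT t A)) (Ubar t)) (Tbar t)"
  unfolding xvec_ro[OF minusT_in_vecs assms] xvec_minusT_first[OF assms] ..

lemma qnum_minusT:
  assumes "1 \<le> t"
  shows "qnum t (minusT t A) = card (exit_points t A) + card (entry_points t A)
    + (if minusT t A 1 + minusT t A t = 0 then 0 else 1)"
proof -
  have "{n \<in> {1..t}. xvec t (minusT t A) n \<noteq> 0}
      = (if minusT t A 1 + minusT t A t = 0 then {} else {1}) \<union> (exit_points t A \<union> entry_points t A)"
    using assms by (auto simp: xvec_minusT_apply exit_points_def entry_points_def unitv_def)
  moreover have "exit_points t A \<inter> entry_points t A = {}" "1 \<notin> exit_points t A \<union> entry_points t A"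
    by (auto simp: exit_points_def entry_points_def)
  moreover have "finite (exit_points t A)" "finite (entry_points t A)"
    by (simp_all add: exit_points_def entry_points_def)
  ultimately show ?thesis
    by (simp add: qnum_def card_Un_disjoint)
qed

lemma sum_unitv_reflect:
  assumes "\<And>k. k \<in> K \<Longrightarrow> f k \<in> {2..t}"
  shows "(\<Sum>k\<in>K. unitv (t + 2 - f k)) n
    = (if n \<in> {2..t} then (\<Sum>k\<in>K. unitv (f k)) (t + 2 - n) else 0)"
proof -
  have "unitv (t + 2 - f k) n = unitv (f k) (t + 2 - n)" if "k \<in> K" "n \<in> {2..t}" for k
    using assms[OF that(1)] that(2) by (auto simp: unitv_def)
  moreover have "unitv (t + 2 - f k) n = 0" if "k \<in> K" "n \<notin> {2..t}" for k
    using assms[OF that(1)] that(2) by (auto simp: unitv_def)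
  ultimately show ?thesis
    by (simp add: sum_fun_apply)
qed

lemma vecmat_Ubar_Tbar_unitv_combination:
  assumes "\<And>k. k \<in> K \<Longrightarrow> f k \<in> {2..t}" "\<And>l. l \<in> L \<Longrightarrow> g l \<in> {2..t}"
  shows "vecmat t (vecmat t ((\<lambda>n. c * unitv 1 n) + (\<Sum>k\<in>K. unitv (f k)) - (\<Sum>l\<in>L. unitv (g l)))
      (Ubar t)) (Tbar t) = (\<Sum>k\<in>K. unitv (t + 2 - f k)) - (\<Sum>l\<in>L. unitv (t + 2 - g l))"
    (is "?lhs = ?rhs")
proof
  fix n
  have "((\<Sum>k\<in>K. unitv (t + 2 - f k)) - (\<Sum>l\<in>L. unitv (t + 2 - g l))) n
      = (if n \<in> {2..t} then ((\<Sum>k\<in>K. unitv (f k)) - (\<Sum>l\<in>L. unitv (g l))) (t + 2 - n) else 0)"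
    using sum_unitv_reflect [of K f, OF assms(1)] sum_unitv_reflect [of L g, OF assms(2)] by simp
  moreover have "unitv 1 (t + 2 - n) = 0" if "n \<in> {2..t}"
    using that by (auto simp: unitv_def)
  ultimately show "?lhs n = ?rhs n"
    by (simp add: vecmat_Ubar_Tbar)
qed

locale separated_intervals =
  fixes t \<rho> :: nat and A :: "nat set" and i j :: "nat \<Rightarrow> nat"
  assumes A_subset: "A \<subseteq> {1..t}"
    and A_nonempty: "A \<noteq> {}"
    and A_eq: "A = (\<Union>k\<in>{1..\<rho>}. {i k..j k})"
    and interval_le: "\<And>k. k \<in> {1..\<rho>} \<Longrightarrow> i k \<le> j k"
    and interval_gap: "\<And>k. 1 \<le> k \<Longrightarrow> k \<le> \<rho> - 1 \<Longrightarrow> j k + 2 \<le> i (k + 1)"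
begin

definition exit_indices :: "nat set" where
  "exit_indices = {k \<in> {1..\<rho>}. j k < t}"

definition entry_indices :: "nat set" where
  "entry_indices = {l \<in> {1..\<rho>}. 1 < i l}"

lemma t_pos: "1 \<le> t"
  using A_subset A_nonempty by fastforce

lemma rho_pos: "1 \<le> \<rho>"
  using A_nonempty by (auto simp: A_eq)

lemma interval_subset: "k \<in> {1..\<rho>} \<Longrightarrow> {i k..j k} \<subseteq> A"
  by (auto simp: A_eq)

lemma interval_bounds:
  assumes "k \<in> {1..\<rho>}"
  shows "1 \<le> i k" "j k \<le> t"
  using interval_subset[OF assms] interval_le[OF assms] A_subset by fastforce+

lemma interval_gap_trans:
  assumes "1 \<le> k" "k < k'" "k' \<le> \<rho>"
  shows "j k + 2 \<le> i k'"
proof -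
  from \<open>k < k'\<close> have "Suc k \<le> k'"
    by simp
  then show ?thesis
    using assms(3)
  proof (induction k' rule: dec_induct)
    case base
    then show ?case
      using interval_gap[of k] assms(1) by simp
  next
    case (step n)
    then have "i n \<le> j n" "j n + 2 \<le> i (n + 1)"
      using interval_le[of n] interval_gap[of n] assms(1) by simp_all
    then show ?case
      using step by simp
  qed
qed

lemma adjacent_points_same_interval:
  assumes k: "k \<in> {1..\<rho>}" "e \<in> {i k..j k}" and k': "k' \<in> {1..\<rho>}" "e' \<in> {i k'..j k'}"
    and close: "e' \<le> e + 1" "e \<le> e' + 1"
  shows "k = k'"
proof (rule ccontr)
  assume "k \<noteq> k'"
  then consider "k < k'" | "k' < k"
    by linarith
  then show False
  proof cases
    case 1
    then show False
      using interval_gap_trans[of k k'] k k' close by auto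
  next
    case 2
    then show False
      using interval_gap_trans[of k' k] k k' close by auto
  qed
qed

lemma first_interval_start:
  assumes "1 \<in> A"
  shows "i 1 = 1"
proof -
  obtain k where k: "k \<in> {1..\<rho>}" "i k \<le> 1"
    using assms by (auto simp: A_eq)
  have "k = 1"
    using interval_gap_trans[of 1 k] k by (cases "k = 1") auto
  then show ?thesis
    using k interval_bounds(1)[OF k(1)] by simp
qed

lemma last_interval_end:
  assumes "t \<in> A"
  shows "j \<rho> = t"
proof -
  obtain k where k: "k \<in> {1..\<rho>}" "t \<le> j k"
    using assms by (auto simp: A_eq)
  have "k = \<rho>"
    using interval_gap_trans[of k \<rho>] k interval_le[of \<rho>] interval_bounds[of \<rho>]
      interval_bounds[OF k(1)] rho_pos
    by (cases "k = \<rho>") auto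
  then show ?thesis
    using k interval_bounds(2)[OF k(1)] by simp
qed

lemma exit_indices_eq: "exit_indices = (if t \<in> A then {1..\<rho> - 1} else {1..\<rho>})"
proof (cases "t \<in> A")
  case True
  have "j k < t" if "k \<in> {1..\<rho> - 1}" for k
  proof -
    have "k < \<rho>" "\<rho> \<in> {1..\<rho>}"
      using that rho_pos by auto
    then show ?thesis
      using that interval_gap_trans[of k \<rho>] interval_le[of \<rho>] interval_bounds(2)[of \<rho>] by auto
  qed
  moreover have "k \<in> {1..\<rho> - 1}" if "k \<in> {1..\<rho>}" "j k < t" for k
    using that last_interval_end[OF True] by (cases "k = \<rho>") auto
  ultimately show ?thesis
    using True by (auto simp: exit_indices_def)
next
  case False
  have "j k \<noteq> t" if "k \<in> {1..\<rho>}" for k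
    using False interval_subset[OF that] interval_le[OF that] by auto
  then show ?thesis
    using False interval_bounds(2) by (fastforce simp: exit_indices_def)
qed

lemma entry_indices_eq: "entry_indices = (if 1 \<in> A then {2..\<rho>} else {1..\<rho>})"
proof (cases "1 \<in> A")
  case True
  have "1 < i l" if "l \<in> {2..\<rho>}" for l
    using that interval_gap_trans[of 1 l] by simp
  moreover have "l \<in> {2..\<rho>}" if "l \<in> {1..\<rho>}" "1 < i l" for l
    using that first_interval_start[OF True] by (cases "l = 1") auto
  ultimately show ?thesis
    using True by (auto simp: entry_indices_def)
next
  case False
  have "i l \<noteq> 1" if "l \<in> {1..\<rho>}" for l
    using False interval_subset[OF that] interval_le[OF that] by auto
  then show ?thesis
    using False interval_bounds(1) by (fastforce simp: entry_indices_def)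
qed

lemma exit_points_eq: "exit_points t A = (\<lambda>k. j k + 1) ` exit_indices"
proof (intro subset_antisym subsetI)
  fix n
  assume "n \<in> exit_points t A"
  then have n: "n \<in> {2..t}" "n - 1 \<in> A" "n \<notin> A"
    by (auto simp: exit_points_def)
  then obtain k where k: "k \<in> {1..\<rho>}" "n - 1 \<in> {i k..j k}"
    by (auto simp: A_eq)
  moreover have "n \<notin> {i k..j k}"
    using n interval_subset[OF k(1)] by auto
  ultimately have "n = j k + 1"
    using n by auto
  then show "n \<in> (\<lambda>k. j k + 1) ` exit_indices"
    using k n by (auto simp: exit_indices_def)
next
  fix n
  assume "n \<in> (\<lambda>k. j k + 1) ` exit_indices"
  then obtain k where k: "k \<in> {1..\<rho>}" "j k < t" and n: "n = j k + 1"
    by (auto simp: exit_indices_def)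
  have "n \<notin> A"
  proof
    assume "n \<in> A"
    then obtain k' where k': "k' \<in> {1..\<rho>}" "n \<in> {i k'..j k'}"
      by (auto simp: A_eq)
    then have "k' = k"
      using adjacent_points_same_interval[OF k' k(1), of "j k"] interval_le[OF k(1)] n by auto
    then show False
      using k' n by auto
  qed
  then show "n \<in> exit_points t A"
    using k n interval_subset[OF k(1)] interval_le[OF k(1)] interval_bounds[OF k(1)]
    by (auto simp: exit_points_def)
qed

lemma entry_points_eq: "entry_points t A = i ` entry_indices"
proof (intro subset_antisym subsetI)
  fix n
  assume "n \<in> entry_points t A"
  then have n: "n \<in> {2..t}" "n - 1 \<notin> A" "n \<in> A"
    by (auto simp: entry_points_def)
  then obtain k where k: "k \<in> {1..\<rho>}" "n \<in> {i k..j k}"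
    by (auto simp: A_eq)
  moreover have "n - 1 \<notin> {i k..j k}"
    using n interval_subset[OF k(1)] by auto
  ultimately have "n = i k"
    using n by auto
  then show "n \<in> i ` entry_indices"
    using k n by (auto simp: entry_indices_def)
next
  fix n
  assume "n \<in> i ` entry_indices"
  then obtain l where l: "l \<in> {1..\<rho>}" "1 < i l" and n: "n = i l"
    by (auto simp: entry_indices_def)
  have "n - 1 \<notin> A"
  proof
    assume "n - 1 \<in> A"
    then obtain k where k: "k \<in> {1..\<rho>}" "n - 1 \<in> {i k..j k}"
      by (auto simp: A_eq)
    then have "k = l"
      using adjacent_points_same_interval[OF k l(1), of "i l"] interval_le[OF l(1)] n by auto
    then show False
      using k l n by auto
  qed
  then show "n \<in> entry_points t A"
    using l n interval_subset[OF l(1)] interval_le[OF l(1)] interval_bounds[OF l(1)]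
    by (auto simp: entry_points_def)
qed

lemma strict_mono_on_i: "strict_mono_on {1..\<rho>} i"
proof (rule strict_mono_onI)
  fix r s
  assume "r \<in> {1..\<rho>}" "s \<in> {1..\<rho>}" "r < s"
  then show "i r < i s"
    using interval_gap_trans[of r s] interval_le[of r] by simp
qed

lemma strict_mono_on_j: "strict_mono_on {1..\<rho>} j"
proof (rule strict_mono_onI)
  fix r s
  assume "r \<in> {1..\<rho>}" "s \<in> {1..\<rho>}" "r < s"
  then show "j r < j s"
    using interval_gap_trans[of r s] interval_le[of s] by simp
qed

lemma inj_on_indices: "inj_on (\<lambda>k. j k + 1) exit_indices" "inj_on i entry_indices"
proof -
  have inj: "inj_on j {1..\<rho>}" "inj_on i {1..\<rho>}"
    using strict_mono_on_j strict_mono_on_i by (auto intro: strict_mono_on_imp_inj_on)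
  have sub: "exit_indices \<subseteq> {1..\<rho>}" "entry_indices \<subseteq> {1..\<rho>}"
    by (auto simp: exit_indices_def entry_indices_def)
  show "inj_on (\<lambda>k. j k + 1) exit_indices"
  proof (rule inj_onI)
    fix x y
    assume "x \<in> exit_indices" "y \<in> exit_indices" "j x + 1 = j y + 1"
    then show "x = y"
      using inj_onD[OF inj(1), of x y] sub(1) by (simp add: subset_iff)
  qed
  show "inj_on i entry_indices"
    by (rule inj_on_subset[OF inj(2) sub(2)])
qed

lemma exit_point_bounds: "k \<in> exit_indices \<Longrightarrow> j k + 1 \<in> {2..t}"
  using interval_bounds(1)[of k] interval_le[of k] by (simp add: exit_indices_def)

lemma entry_point_bounds: "l \<in> entry_indices \<Longrightarrow> i l \<in> {2..t}"
  using interval_bounds(2)[of l] interval_le[of l] by (simp add: entry_indices_def)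

lemma sum_unitv_exit_points:
  "(\<Sum>n\<in>exit_points t A. unitv n) = (\<Sum>k\<in>exit_indices. unitv (j k + 1))"
  by (rule sum.reindex_cong[OF inj_on_indices(1) exit_points_eq]) simp

lemma sum_unitv_entry_points:
  "(\<Sum>n\<in>entry_points t A. unitv n) = (\<Sum>l\<in>entry_indices. unitv (i l))"
  by (rule sum.reindex_cong[OF inj_on_indices(2) entry_points_eq]) simp

lemma card_exit_points: "card (exit_points t A) = card exit_indices"
  unfolding exit_points_eq by (rule card_image[OF inj_on_indices(1)])

lemma card_entry_points: "card (entry_points t A) = card entry_indices"
  unfolding entry_points_eq by (rule card_image[OF inj_on_indices(2)])

lemma xvec_minusT_intervals:
  "xvec t (minusT t A) = (\<lambda>n. (minusT t A 1 + minusT t A t) / 2 * unitv 1 n)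
     + (\<Sum>k\<in>exit_indices. unitv (j k + 1)) - (\<Sum>l\<in>entry_indices. unitv (i l))"
  unfolding xvec_minusT[OF t_pos] sum_unitv_exit_points sum_unitv_entry_points ..

lemma qnum_minusT_intervals:
  "qnum t (minusT t A) = card exit_indices + card entry_indices
     + (if minusT t A 1 + minusT t A t = 0 then 0 else 1)"
  unfolding qnum_minusT[OF t_pos] card_exit_points card_entry_points ..

lemma xvec_ro_minusT_intervals:
  "xvec t (ro t (minusT t A)) = (\<lambda>n. - ((minusT t A 1 + minusT t A t) / 2) * unitv 1 n)
     + (\<Sum>k\<in>exit_indices. unitv (t - j k + 1)) - (\<Sum>l\<in>entry_indices. unitv (t - i l + 2))"
proof -
  have "vecmat t (vecmat t (xvec t (minusT t A)) (Ubar t)) (Tbar t)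
      = (\<Sum>k\<in>exit_indices. unitv (t + 2 - (j k + 1))) - (\<Sum>l\<in>entry_indices. unitv (t + 2 - i l))"
    unfolding xvec_minusT_intervals
    by (rule vecmat_Ubar_Tbar_unitv_combination[OF exit_point_bounds entry_point_bounds])
  also have "\<dots> = (\<Sum>k\<in>exit_indices. unitv (t - j k + 1)) - (\<Sum>l\<in>entry_indices. unitv (t - i l + 2))"
  proof -
    have "t + 2 - (j k + 1) = t - j k + 1" if "k \<in> exit_indices" for k
      using exit_point_bounds[OF that] by auto
    moreover have "t + 2 - i l = t - i l + 2" if "l \<in> entry_indices" for l
      using entry_point_bounds[OF that] by auto
    ultimately show ?thesis
      by simp
  qed
  finally show ?thesis
    unfolding xvec_ro_minusT[OF t_pos] by simp
qed

end

theorem proposition2p2: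
  fixes t \<rho> :: nat and A :: "nat set" and i j :: "nat \<Rightarrow> nat"
  assumes t3: "t \<ge> 3"
    and AE: "A \<subseteq> {1..t}"
    and Ane: "A \<noteq> {}"
    and Aunion: "A = (\<Union>k\<in>{1..\<rho>}. {i k..j k})"
    and ij: "\<And>k. k \<in> {1..\<rho>} \<Longrightarrow> i k \<le> j k"
    and gap: "\<And>k. 1 \<le> k \<Longrightarrow> k \<le> \<rho> - 1 \<Longrightarrow> j k + 2 \<le> i (k + 1)"
  defines "T \<equiv> minusT t A"
  shows
   "({1, t} \<inter> A = {1} \<longrightarrow>
       qnum t T = 2 * \<rho> - 1
     \<and> xvec t T = (\<Sum>k=1..\<rho>. unitv (j k + 1)) - (\<Sum>l=2..\<rho>. unitv (i l))
     \<and> qnum t (ro t T) = 2 * \<rho> - 1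
     \<and> xvec t (ro t T) = (\<Sum>k=1..\<rho>. unitv (t - j k + 1)) - (\<Sum>l=2..\<rho>. unitv (t - i l + 2))
     \<and> xvec t (ro t T) = vecmat t (vecmat t (xvec t T) (Ubar t)) (Tbar t))
  \<and> ({1, t} \<inter> A = {1, t} \<longrightarrow>
       qnum t T = 2 * \<rho> - 1
     \<and> xvec t T = - unitv 1 + (\<Sum>k=1..\<rho>-1. unitv (j k + 1)) - (\<Sum>l=2..\<rho>. unitv (i l))
     \<and> qnum t (ro t T) = 2 * \<rho> - 1
     \<and> xvec t (ro t T) = unitv 1 + (\<Sum>k=1..\<rho>-1. unitv (t - j k + 1)) - (\<Sum>l=2..\<rho>. unitv (t - i l + 2))
     \<and> xvec t (ro t T) = unitv 1 + vecmat t (vecmat t (xvec t T) (Ubar t)) (Tbar t))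
  \<and> ({1, t} \<inter> A = {} \<longrightarrow>
       qnum t T = 2 * \<rho> + 1
     \<and> xvec t T = unitv 1 + (\<Sum>k=1..\<rho>. unitv (j k + 1)) - (\<Sum>l=1..\<rho>. unitv (i l))
     \<and> qnum t (ro t T) = 2 * \<rho> + 1
     \<and> xvec t (ro t T) = - unitv 1 + (\<Sum>k=1..\<rho>. unitv (t - j k + 1)) - (\<Sum>l=1..\<rho>. unitv (t - i l + 2))
     \<and> xvec t (ro t T) = - unitv 1 + vecmat t (vecmat t (xvec t T) (Ubar t)) (Tbar t))
  \<and> ({1, t} \<inter> A = {t} \<longrightarrow>
       qnum t T = 2 * \<rho> - 1
     \<and> xvec t T = (\<Sum>k=1..\<rho>-1. unitv (j k + 1)) - (\<Sum>l=1..\<rho>. unitv (i l))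
     \<and> qnum t (ro t T) = 2 * \<rho> - 1
     \<and> xvec t (ro t T) = (\<Sum>k=1..\<rho>-1. unitv (t - j k + 1)) - (\<Sum>l=1..\<rho>. unitv (t - i l + 2))
     \<and> xvec t (ro t T) = vecmat t (vecmat t (xvec t T) (Ubar t)) (Tbar t))"
proof -
  interpret separated_intervals t \<rho> A i j
    using AE Ane Aunion ij gap by unfold_locales
  have endpoint_cases:
    "{1, t} \<inter> A = {1} \<longleftrightarrow> 1 \<in> A \<and> t \<notin> A" "{1, t} \<inter> A = {1, t} \<longleftrightarrow> 1 \<in> A \<and> t \<in> A"
    "{1, t} \<inter> A = {} \<longleftrightarrow> 1 \<notin> A \<and> t \<notin> A" "{1, t} \<inter> A = {t} \<longleftrightarrow> 1 \<notin> A \<and> t \<in> A"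
    using t3 by (cases "1 \<in> A"; cases "t \<in> A"; auto)+
  have minusT_at: "minusT t A e = (if e \<in> A then -1 else 1)" if "e \<in> {1..t}" for e
    using that by (simp add: minusT_def)
  have uminus_unitv: "(\<lambda>n. - unitv e n) = - unitv e" for e
    by (simp add: fun_eq_iff)
  note coordinates = qnum_minusT_intervals xvec_minusT_intervals qnum_ro[OF minusT_in_vecs t_pos]
    xvec_ro_minusT_intervals xvec_ro_minusT[OF t_pos]
  show ?thesis
    unfolding endpoint_cases T_def using t3 rho_pos coordinates
    by (cases "1 \<in> A"; cases "t \<in> A";
        simp add: exit_indices_eq entry_indices_eq minusT_at zero_fun_def [symmetric] uminus_unitv; arith?)
qed

end
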